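(* Let $\alpha$ be fixed and let $p_1,p_2,\ldots$ be i.i.d. with distribution function $P$ on $[0,1]$ of the form in the context. For each $m$ let $\hat\pi_\alpha=\hat\pi_{\alpha,m}=h_{\alpha}/m$ be computed from $p_1,\ldots,p_m$. Then as $m\to\infty$, $\hat\pi_{\alpha,m}\to\bar\pi_\alpha$ in probability, where \[ \bar\pi_\alpha=\inf_{0\le x<1}\frac{1-P(x\alpha)}{1-x}>0 \] if $P(\alpha)<1$, and $\bar\pi_\alpha=0$ otherwise.
   Context: Efron mixture model: $P(x)=\gamma x+(1-\gamma)P_1(x)$ for $0\le x\le 1$, with $\gamma\in[0,1]$ and $P_1$ a distribution function on $[0,1]$ satisfying $P_1(x)\ge x$. Given $p_1,\ldots,p_m$: let $r_1,\ldots,r_m$ be a permutation with $p_{r_1}\le\cdots\le p_{r_m}$ and $K_i=\{r_{m-i+1},\ldots,r_m\}$. For $I\subseteq\{1,\ldots,m\}$, $p_{(i:I)}$ is the $i$-th smallest of $\{p_j:j\in I\}$; the Simes test rejects $I$ ($I\in\mathcal{U}_\alpha$) iff some $1\le i\le|I|$ has $|I|p_{(i:I)}\le i\alpha$. $h_\alpha=\max\{0\le i\le m: K_i\notin\mathcal{U}_\alpha\}$. *)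

theory Defs
  imports "HOL-Probability.Probability"
begin

definition distr_fun_01 :: "(real \<Rightarrow> real) \<Rightarrow> bool" where
  "distr_fun_01 F \<longleftrightarrow> mono F \<and> (\<forall>x. continuous (at_right x) F)
     \<and> (\<forall>x<0. F x = 0) \<and> (\<forall>x\<ge>1. F x = 1)"

definition efron_model :: "(real \<Rightarrow> real) \<Rightarrow> real \<Rightarrow> (real \<Rightarrow> real) \<Rightarrow> bool" where
  "efron_model P \<gamma> P1 \<longleftrightarrow> \<gamma> \<in> {0..1} \<and> distr_fun_01 P1 \<and> (\<forall>x\<in>{0..1}. P1 x \<ge> x)
     \<and> (\<forall>x\<in>{0..1}. P x = \<gamma> * x + (1 - \<gamma>) * P1 x)"

definition ord_stat :: "(nat \<Rightarrow> real) \<Rightarrow> nat set \<Rightarrow> nat \<Rightarrow> real" where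
  "ord_stat p I i = sort (map p (sorted_list_of_set I)) ! (i - 1)"

definition simes_rejects :: "real \<Rightarrow> (nat \<Rightarrow> real) \<Rightarrow> nat set \<Rightarrow> bool" where
  "simes_rejects \<alpha> p I \<longleftrightarrow> (\<exists>i\<in>{1..card I}. real (card I) * ord_stat p I i \<le> real i * \<alpha>)"

text \<open>r_1,...,r_m: indices 1..m sorted by increasing p-value; K_i = {r_(m-i+1),...,r_m}.\<close>
definition K_set :: "nat \<Rightarrow> (nat \<Rightarrow> real) \<Rightarrow> nat \<Rightarrow> nat set" where
  "K_set m p i = set (drop (m - i) (sort_key p [1..<m+1]))"

definition h_alpha :: "real \<Rightarrow> nat \<Rightarrow> (nat \<Rightarrow> real) \<Rightarrow> nat" where
  "h_alpha \<alpha> m p = Max {i \<in> {0..m}. \<not> simes_rejects \<alpha> p (K_set m p i)}"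

definition pi_bar :: "(real \<Rightarrow> real) \<Rightarrow> real \<Rightarrow> real" where
  "pi_bar P \<alpha> = (if P \<alpha> < 1 then (INF x\<in>{0..<1}. (1 - P (x * \<alpha>)) / (1 - x)) else 0)"

definition conv_in_prob :: "'a measure \<Rightarrow> (nat \<Rightarrow> 'a \<Rightarrow> real) \<Rightarrow> real \<Rightarrow> bool" where
  "conv_in_prob M X c \<longleftrightarrow>
     (\<forall>\<epsilon>>0. (\<lambda>m. measure M {\<omega> \<in> space M. \<bar>X m \<omega> - c\<bar> > \<epsilon>}) \<longlonglongrightarrow> 0)"

end

theory Submission
  imports Defs "HOL-Probability.Hoeffding" "HOL-Real_Asymp.Real_Asymp"
begin

text \<open>
  Let F_m be the empirical distribution function of p_1, ..., p_m. Since K_i consists of the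
  i largest p-values, the Simes test rejects K_i iff F_m(j\<alpha>/i) \<ge> 1 - (i - j)/m for some
  j \<le> i. Applying this to the non-rejected K_h with j \<approx> x h gives
  h (1 - x) \<le> m (1 - F_m(x\<alpha>)) for every x in [0,1], so h/m is asymptotically at most
  (1 - P(x\<alpha>))/(1 - x) for each x, hence at most \<pi> = pi_bar P \<alpha>. Conversely P(x\<alpha>) \<le> 1 - \<pi>(1 - x), so
  as soon as F_m is uniformly close to P on [0,\<alpha>] -- which by monotonicity follows from
  closeness on a finite grid -- no K_i with i/m a margin below \<pi> is rejected, i.e. h/m is
  asymptotically at least \<pi>. Both bounds only involve F_m at finitely many points, where
  F_m \<rightarrow> P in probability by Hoeffding's inequality. When P(\<alpha>) = 1 all p-values are
  almost surely at most \<alpha>, and then h = 0.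
\<close>

definition count_le :: "(nat \<Rightarrow> real) \<Rightarrow> nat \<Rightarrow> real \<Rightarrow> nat" where
  "count_le q m s = card {k \<in> {1..m}. q k \<le> s}"

lemma count_le_mono: "s \<le> s' \<Longrightarrow> count_le q m s \<le> count_le q m s'"
  unfolding count_le_def by (rule card_mono) auto

lemma count_le_le: "count_le q m s \<le> m"
  unfolding count_le_def by (rule order_trans[OF card_mono[of "{1..m}"]]) auto

lemma count_le_eq_sum: "real (count_le q m s) = (\<Sum>k\<in>{1..m}. if q k \<le> s then 1 else 0)"
  unfolding count_le_def by (simp add: sum.If_cases Int_def conj_commute)

lemma sorted_nth_le_iff_less_length_filter:
  fixes ys :: "'a :: linorder list"
  assumes "sorted ys" "i < length ys"
  shows "ys ! i \<le> x \<longleftrightarrow> i < length (filter (\<lambda>v. v \<le> x) ys)"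
  using assms
proof (induction ys arbitrary: i)
  case (Cons a ys)
  show ?case
  proof (cases "a \<le> x")
    case True
    then show ?thesis using Cons by (cases i) auto
  next
    case False
    then have "filter (\<lambda>v. v \<le> x) ys = []" using Cons.prems(1) by (auto simp: filter_empty_conv)
    moreover have "a \<le> (a # ys) ! i" using Cons.prems by (cases i) auto
    ultimately show ?thesis using False by auto
  qed
qed simp

lemma ord_stat_le_iff:
  assumes "finite I" "1 \<le> j" "j \<le> card I"
  shows "ord_stat q I j \<le> x \<longleftrightarrow> j \<le> card {k \<in> I. q k \<le> x}"
proof -
  define xs where "xs = map q (sorted_list_of_set I)"
  have "length (filter (\<lambda>v. v \<le> x) (sort xs)) = length (filter (\<lambda>v. v \<le> x) xs)"
    by (metis mset_filter mset_sort size_mset)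
  also have "\<dots> = length (filter (\<lambda>k. q k \<le> x) (sorted_list_of_set I))"
    by (simp add: xs_def filter_map comp_def)
  also have "\<dots> = card {k \<in> I. q k \<le> x}"
    using assms(1) by (subst distinct_card[symmetric]) auto
  finally show ?thesis
    using sorted_nth_le_iff_less_length_filter[of "sort xs" "j - 1" x] assms
    by (simp add: ord_stat_def xs_def less_diff_conv2 less_Suc_eq_le)
qed

lemma
  assumes "i \<le> m"
  shows K_set_subset: "K_set m q i \<subseteq> {1..m}"
    and card_K_set: "card (K_set m q i) = i"
    and K_set_dominates: "a \<in> K_set m q i \<Longrightarrow> b \<in> {1..m} - K_set m q i \<Longrightarrow> q b \<le> q a"
proof -
  define L where "L = sort_key q [1..<m+1]"
  have setL: "set L = {1..m}" and "distinct L" "length L = m" "sorted (map q L)"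
    unfolding L_def by auto
  have K: "K_set m q i = set (drop (m - i) L)" unfolding K_set_def L_def ..
  show "K_set m q i \<subseteq> {1..m}" unfolding K setL[symmetric] by (rule set_drop_subset)
  show "card (K_set m q i) = i" unfolding K using \<open>distinct L\<close> \<open>length L = m\<close> assms
    by (simp add: distinct_card)
  assume a: "a \<in> K_set m q i" and b: "b \<in> {1..m} - K_set m q i"
  have "b \<in> set (take (m - i) L)"
    using b setL K by (metis Diff_iff Un_iff append_take_drop_id set_append)
  moreover have "sorted (map q (take (m - i) L) @ map q (drop (m - i) L))"
    using \<open>sorted (map q L)\<close> by (metis append_take_drop_id map_append)
  ultimately show "q b \<le> q a" using a K by (auto simp: sorted_append)
qed

text \<open>As K_i holds the i largest p-values, every p-value outside K_i lies below any
  threshold that some element of K_i meets.\<close>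
lemma card_filter_K_set:
  assumes "i \<le> m"
  shows "card {k \<in> K_set m q i. q k \<le> x} = count_le q m x - (m - i)"
proof -
  define K where "K = K_set m q i"
  define A where "A = {k \<in> {1..m}. q k \<le> x}"
  have KS: "K \<subseteq> {1..m}" and cK: "card K = i"
    and dom: "\<And>a b. a \<in> K \<Longrightarrow> b \<in> {1..m} - K \<Longrightarrow> q b \<le> q a"
    using K_set_subset[OF assms] card_K_set[OF assms] K_set_dominates[OF assms] by (auto simp: K_def)
  have cO: "card ({1..m} - K) = m - i" using KS cK by (simp add: card_Diff_subset finite_subset)
  show ?thesis
  proof (cases "\<exists>a\<in>K. q a \<le> x")
    case True
    then have "A = {k \<in> K. q k \<le> x} \<union> ({1..m} - K)" using dom KS by (force simp: A_def)
    moreover have "finite K" using KS finite_subset by blast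
    ultimately have "card A = card {k \<in> K. q k \<le> x} + card ({1..m} - K)"
      by (simp add: card_Un_disjoint disjoint_iff)
    then have "card A = card {k \<in> K. q k \<le> x} + (m - i)" using cO by simp
    then show ?thesis by (simp add: A_def K_def count_le_def)
  next
    case False
    then have "A \<subseteq> {1..m} - K" by (auto simp: A_def)
    then have "card A \<le> m - i" using cO by (metis card_mono finite_Diff finite_atLeastAtMost)
    moreover have "{k \<in> K. q k \<le> x} = {}" using False by auto
    ultimately show ?thesis unfolding count_le_def K_def[symmetric] A_def[symmetric]
      by (metis card.empty diff_is_0_eq)
  qed
qed

lemma simes_rejects_K_set_iff:
  assumes "0 < i" "i \<le> m"
  shows "simes_rejects \<alpha> q (K_set m q i) \<longleftrightarrow>
    (\<exists>j\<in>{1..i}. m - i + j \<le> count_le q m (real j * \<alpha> / real i))"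
proof -
  have fin: "finite (K_set m q i)"
    using K_set_subset[OF assms(2)] by (rule finite_subset) simp
  have "real i * ord_stat q (K_set m q i) j \<le> real j * \<alpha> \<longleftrightarrow>
        m - i + j \<le> count_le q m (real j * \<alpha> / real i)" if "j \<in> {1..i}" for j
  proof -
    have "real i * ord_stat q (K_set m q i) j \<le> real j * \<alpha> \<longleftrightarrow>
        ord_stat q (K_set m q i) j \<le> real j * \<alpha> / real i"
      using assms by (simp add: pos_le_divide_eq mult.commute)
    also have "\<dots> \<longleftrightarrow> j \<le> card {k \<in> K_set m q i. q k \<le> real j * \<alpha> / real i}"
      using fin card_K_set[OF assms(2)] that by (intro ord_stat_le_iff) auto
    finally show ?thesis using that unfolding card_filter_K_set[OF assms(2)] by auto
  qed
  then show ?thesis unfolding simes_rejects_def card_K_set[OF assms(2)] by auto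
qed

lemma
  shows h_alpha_le: "h_alpha \<alpha> m q \<le> m"
    and not_simes_rejects_h_alpha: "\<not> simes_rejects \<alpha> q (K_set m q (h_alpha \<alpha> m q))"
    and le_h_alpha: "i \<le> m \<Longrightarrow> \<not> simes_rejects \<alpha> q (K_set m q i) \<Longrightarrow> i \<le> h_alpha \<alpha> m q"
proof -
  define H where "H = {i \<in> {0..m}. \<not> simes_rejects \<alpha> q (K_set m q i)}"
  have "finite H" by (simp add: H_def)
  have "0 \<in> H" using card_K_set[of 0 m q] by (simp add: H_def simes_rejects_def)
  then have "h_alpha \<alpha> m q \<in> H"
    unfolding h_alpha_def H_def[symmetric] using \<open>finite H\<close> by (intro Max_in) auto
  then show "h_alpha \<alpha> m q \<le> m" "\<not> simes_rejects \<alpha> q (K_set m q (h_alpha \<alpha> m q))"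
    by (auto simp: H_def)
  show "i \<le> h_alpha \<alpha> m q" if "i \<le> m" "\<not> simes_rejects \<alpha> q (K_set m q i)"
    unfolding h_alpha_def H_def[symmetric] using that \<open>finite H\<close> by (intro Max_ge) (auto simp: H_def)
qed

lemma h_alpha_mult_le:
  assumes "0 \<le> \<alpha>" "0 \<le> x" "x \<le> 1"
  shows "real (h_alpha \<alpha> m q) * (1 - x) \<le> real m - real (count_le q m (x * \<alpha>))"
proof (cases "h_alpha \<alpha> m q = 0")
  case True
  then show ?thesis using count_le_le[of q m] by simp
next
  case False
  define h where "h = h_alpha \<alpha> m q"
  have h: "0 < h" "h \<le> m" using False h_alpha_le by (auto simp: h_def)
  define j where "j = max 1 (nat \<lceil>x * h\<rceil>)"
  have "x * h \<le> h" using assms by (simp add: mult_left_le_one_le)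
  then have j: "j \<in> {1..h}" using h by (auto simp: j_def ceiling_le_iff nat_le_iff)
  have j_ge: "x * h \<le> j" and j_le: "j \<le> x * h + 1"
    using assms by (auto simp: j_def max_def) linarith+
  have "\<not> m - h + j \<le> count_le q m (real j * \<alpha> / h)"
    using not_simes_rejects_h_alpha[of \<alpha> q m] simes_rejects_K_set_iff[OF h] j by (auto simp: h_def)
  moreover have "count_le q m (x * \<alpha>) \<le> count_le q m (real j * \<alpha> / h)"
  proof (rule count_le_mono)
    have "x * h * \<alpha> \<le> j * \<alpha>" using j_ge assms by (intro mult_right_mono) auto
    then show "x * \<alpha> \<le> real j * \<alpha> / h" using h by (simp add: field_simps)
  qed
  ultimately have "real (count_le q m (x * \<alpha>)) + 1 \<le> real m - h + j"
    using h j by linarith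
  then show ?thesis using j_le by (simp add: h_def algebra_simps)
qed

lemma h_alpha_eq_0_if_all_le:
  assumes "\<forall>k\<in>{1..m}. q k \<le> \<alpha>"
  shows "h_alpha \<alpha> m q = 0"
proof (rule ccontr)
  define h where "h = h_alpha \<alpha> m q"
  assume "h_alpha \<alpha> m q \<noteq> 0"
  then have h: "0 < h" "h \<le> m" using h_alpha_le by (auto simp: h_def)
  have "{k \<in> {1..m}. q k \<le> \<alpha>} = {1..m}" using assms by auto
  then have "count_le q m (real h * \<alpha> / h) = m" using h by (simp add: count_le_def)
  then have "simes_rejects \<alpha> q (K_set m q h)"
    unfolding simes_rejects_K_set_iff[OF h] using h by (intro bexI[of _ h]) auto
  then show False using not_simes_rejects_h_alpha by (simp add: h_def)
qed

lemma not_simes_rejects_K_set_if_below: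
  assumes "0 < i" "i \<le> m"
    and below: "\<And>t. t \<in> {0<..1} \<Longrightarrow> real (count_le q m (t * \<alpha>)) < real m - real i * (1 - t)"
  shows "\<not> simes_rejects \<alpha> q (K_set m q i)"
proof
  assume "simes_rejects \<alpha> q (K_set m q i)"
  then obtain j where j: "j \<in> {1..i}" and rej: "m - i + j \<le> count_le q m (real j * \<alpha> / i)"
    using simes_rejects_K_set_iff[OF assms(1,2)] by blast
  have "real (count_le q m (j / i * \<alpha>)) < real m - real i * (1 - j / i)"
    using j assms(1) by (intro below) auto
  also have "\<dots> = real (m - i + j)" using assms(1,2) by (simp add: field_simps of_nat_diff)
  finally show False using rej by simp
qed

lemma exists_grid_point_above:
  fixes t :: real and L :: nat
  assumes "0 < L" "0 < t" "t \<le> 1"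
  shows "\<exists>k\<in>{1..L}. t \<le> real k / L \<and> real k / L \<le> t + 1 / L"
proof
  define k where "k = nat \<lceil>t * L\<rceil>"
  have "t * L \<le> k" "k \<le> t * L + 1" using assms by (auto simp: k_def)
  then show "t \<le> real k / L \<and> real k / L \<le> t + 1 / L" using assms by (simp add: field_simps)
  have "t * L \<le> 1 * real L" using assms by (intro mult_right_mono) auto
  then have "\<lceil>t * L\<rceil> \<le> int L" by (simp add: ceiling_le_iff)
  moreover have "0 < t * L" using assms by simp
  ultimately show "k \<in> {1..L}" by (auto simp: k_def nat_le_iff Suc_le_eq)
qed

text \<open>Near t = 1 the margin comes from P(b\<alpha>) \<le> 1 - c, away from it from the slope \<pi>
  of the line bounding P; the grid width d is absorbed in either case.\<close>
lemma simes_line_margin: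
  fixes \<pi> c \<epsilon> r t b d y :: real
  assumes "y \<le> 1 - c" "y \<le> 1 - \<pi> * (1 - b)" "r \<le> 1" "r \<le> \<pi> - \<epsilon> / 2"
    "t \<le> b" "b \<le> t + d" "b \<le> 1" "\<pi> \<le> 1" "d < \<epsilon> * c / 8" "0 < c" "0 < \<epsilon>" "\<epsilon> \<le> 1"
  shows "y + \<epsilon> * c / 8 \<le> 1 - r * (1 - t)"
proof (cases "1 - t < c / 2")
  case True
  have "0 \<le> (1 - r) * (1 - t)" using assms by (intro mult_nonneg_nonneg) auto
  then have "r * (1 - t) \<le> 1 - t" by (simp add: algebra_simps)
  moreover have "\<epsilon> * c / 8 \<le> c / 8" using assms by auto
  ultimately show ?thesis using assms True by linarith
next
  case False
  have "0 \<le> (1 - \<pi>) * (b - t)" using assms by (intro mult_nonneg_nonneg) auto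
  moreover have "(\<epsilon> / 2) * (c / 2) \<le> (\<pi> - r) * (1 - t)" using assms False by (intro mult_mono) auto
  ultimately show ?thesis using assms by (simp add: algebra_simps)
qed

lemma count_le_below_simes_line:
  fixes P :: "real \<Rightarrow> real" and \<alpha> c \<epsilon> \<pi> r t :: real and L m :: nat
  assumes "0 \<le> \<alpha>" "0 < c" "0 < \<epsilon>" "\<epsilon> \<le> 1" "\<pi> \<le> 1" "0 < L" "1 / L < \<epsilon> * c / 8" "0 < m"
    and r: "r \<le> 1" "r \<le> \<pi> - \<epsilon> / 2" and t: "t \<in> {0<..1}"
    and P_le_c: "\<And>x. x \<in> {0..1} \<Longrightarrow> P (x * \<alpha>) \<le> 1 - c"
    and P_le_line: "\<And>x. x \<in> {0..1} \<Longrightarrow> P (x * \<alpha>) \<le> 1 - \<pi> * (1 - x)"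
    and grid: "\<And>k. k \<in> {1..L} \<Longrightarrow>
      real (count_le q m (real k / L * \<alpha>)) \<le> (P (real k / L * \<alpha>) + \<epsilon> * c / 16) * m"
  shows "real (count_le q m (t * \<alpha>)) < (1 - r * (1 - t)) * m"
proof -
  obtain k where k: "k \<in> {1..L}" and tb: "t \<le> real k / L" and bt: "real k / L \<le> t + 1 / L"
    using exists_grid_point_above[OF \<open>0 < L\<close>, of t] t by auto
  define b where "b = real k / L"
  have b: "b \<in> {0..1}" using k by (simp add: b_def)
  have "t * \<alpha> \<le> b * \<alpha>" using tb assms(1) by (intro mult_right_mono) (auto simp: b_def)
  then have "real (count_le q m (t * \<alpha>)) \<le> real (count_le q m (b * \<alpha>))"
    by (simp add: count_le_mono)
  also have "\<dots> \<le> (P (b * \<alpha>) + \<epsilon> * c / 16) * m" using grid[OF k] by (simp add: b_def)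
  also have "\<dots> < (P (b * \<alpha>) + \<epsilon> * c / 8) * m" using assms by (intro mult_strict_right_mono) auto
  also have "\<dots> \<le> (1 - r * (1 - t)) * m"
  proof (rule mult_right_mono)
    show "P (b * \<alpha>) + \<epsilon> * c / 8 \<le> 1 - r * (1 - t)"
      using b assms
      by (intro simes_line_margin[OF P_le_c[OF b] P_le_line[OF b] r, of t "1 / L"])
        (auto simp: b_def tb bt)
  qed simp
  finally show ?thesis .
qed

lemma h_alpha_ge_if_grid_bound:
  fixes P :: "real \<Rightarrow> real" and \<alpha> c \<epsilon> \<pi> :: real and L m :: nat
  assumes "0 \<le> \<alpha>" "0 < c" "0 < \<epsilon>" "\<pi> \<le> 1" "0 < L" "1 / L < \<epsilon> * c / 8" "0 < m" "1 / m < \<epsilon> / 2"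
    and P_le_c: "\<And>x. x \<in> {0..1} \<Longrightarrow> P (x * \<alpha>) \<le> 1 - c"
    and P_le_line: "\<And>x. x \<in> {0..1} \<Longrightarrow> P (x * \<alpha>) \<le> 1 - \<pi> * (1 - x)"
    and grid: "\<And>k. k \<in> {1..L} \<Longrightarrow>
      real (count_le q m (real k / L * \<alpha>)) \<le> (P (real k / L * \<alpha>) + \<epsilon> * c / 16) * m"
  shows "(\<pi> - \<epsilon>) * m \<le> h_alpha \<alpha> m q"
proof (cases "\<pi> - \<epsilon> \<le> 0")
  case True
  then have "(\<pi> - \<epsilon>) * m \<le> 0" by (simp add: mult_nonpos_nonneg)
  then show ?thesis by (meson of_nat_0_le_iff order_trans)
next
  case False
  define i where "i = nat \<lceil>(\<pi> - \<epsilon>) * m\<rceil>"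
  have "0 < (\<pi> - \<epsilon>) * m" using False assms(7) by simp
  then have i_ge: "(\<pi> - \<epsilon>) * m \<le> i" and i_le: "i \<le> (\<pi> - \<epsilon>) * m + 1" and "0 < i"
    by (auto simp: i_def)
  have "(\<pi> - \<epsilon>) * m \<le> 1 * real m" using assms by (intro mult_right_mono) auto
  then have "i \<le> m" by (simp add: i_def ceiling_le_iff nat_le_iff)
  have "i / m \<le> 1" using \<open>i \<le> m\<close> assms(7) by (simp add: divide_le_eq_1)
  have "i / m \<le> \<pi> - \<epsilon> + 1 / m" using i_le assms(7) by (simp add: field_simps)
  then have "i / m \<le> \<pi> - \<epsilon> / 2" using assms(8) by linarith
  have "\<not> simes_rejects \<alpha> q (K_set m q i)"
  proof (rule not_simes_rejects_K_set_if_below[OF \<open>0 < i\<close> \<open>i \<le> m\<close>])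
    fix t :: real assume "t \<in> {0<..1}"
    have "\<epsilon> \<le> 1" using False assms(4) by linarith
    have "real (count_le q m (t * \<alpha>)) < (1 - i / m * (1 - t)) * m"
      by (rule count_le_below_simes_line[OF assms(1-3) \<open>\<epsilon> \<le> 1\<close> assms(4-7) \<open>i / m \<le> 1\<close>
            \<open>i / m \<le> \<pi> - \<epsilon> / 2\<close> \<open>t \<in> {0<..1}\<close> P_le_c P_le_line grid])
    also have "\<dots> = real m - real i * (1 - t)" using assms(7) by (simp add: field_simps)
    finally show "real (count_le q m (t * \<alpha>)) < real m - real i * (1 - t)" .
  qed
  then have "i \<le> h_alpha \<alpha> m q" using \<open>i \<le> m\<close> by (rule le_h_alpha[rotated])
  then show ?thesis using i_ge by linarith
qed

lemma
  fixes P :: "real \<Rightarrow> real"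
  assumes "P \<alpha> < 1" and P_le_1: "\<And>x. P x \<le> 1"
  shows pi_bar_le_line: "x \<in> {0..1} \<Longrightarrow> P (x * \<alpha>) \<le> 1 - pi_bar P \<alpha> * (1 - x)"
    and pi_bar_less_ratio: "0 < \<epsilon> \<Longrightarrow> \<exists>x\<in>{0..<1}. (1 - P (x * \<alpha>)) / (1 - x) < pi_bar P \<alpha> + \<epsilon>"
    and pi_bar_ge: "mono P \<Longrightarrow> 0 \<le> \<alpha> \<Longrightarrow> 1 - P \<alpha> \<le> pi_bar P \<alpha>"
proof -
  define g where "g x = (1 - P (x * \<alpha>)) / (1 - x)" for x
  have pi: "pi_bar P \<alpha> = (INF x\<in>{0..<1}. g x)" using assms(1) by (simp add: pi_bar_def g_def)
  have bdd: "bdd_below (g ` {0..<1})"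
    using P_le_1 by (intro bdd_belowI[where m=0]) (auto simp: g_def)
  show "P (x * \<alpha>) \<le> 1 - pi_bar P \<alpha> * (1 - x)" if x: "x \<in> {0..1}"
  proof (cases "x = 1")
    case False
    then have "pi_bar P \<alpha> \<le> g x" unfolding pi using x by (intro cINF_lower bdd) auto
    then show ?thesis using x False by (simp add: g_def le_divide_eq algebra_simps)
  qed (use P_le_1 in simp)
  show "\<exists>x\<in>{0..<1}. g x < pi_bar P \<alpha> + \<epsilon>" if "0 < \<epsilon>"
    using that unfolding pi by (subst cINF_less_iff[OF _ bdd, symmetric]) auto
  show "1 - P \<alpha> \<le> pi_bar P \<alpha>" if "mono P" "0 \<le> \<alpha>"
    unfolding pi
  proof (rule cINF_greatest)
    fix x :: real assume x: "x \<in> {0..<1}"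
    have "P (x * \<alpha>) \<le> P \<alpha>" using x that by (intro monoD[OF \<open>mono P\<close>]) (simp add: mult_left_le_one_le)
    moreover have "1 - P (x * \<alpha>) \<le> g x"
      using x P_le_1[of "x * \<alpha>"] by (simp add: g_def le_divide_eq mult_left_le)
    ultimately show "1 - P \<alpha> \<le> g x" by linarith
  qed simp
qed

lemma h_alpha_div_less_if_ecdf_close:
  fixes P :: "real \<Rightarrow> real"
  assumes "0 \<le> \<alpha>" "x0 \<in> {0..<1}" "0 < m"
    and ratio: "(1 - P (x0 * \<alpha>)) / (1 - x0) < \<pi> + \<epsilon> / 3"
    and close: "\<bar>real (count_le q m (x0 * \<alpha>)) / m - P (x0 * \<alpha>)\<bar> < (1 - x0) * \<epsilon> / 3"
  shows "real (h_alpha \<alpha> m q) / m < \<pi> + \<epsilon>"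
proof -
  define F where "F = real (count_le q m (x0 * \<alpha>)) / m"
  have "0 < (1 - x0) * \<epsilon> / 3" using close abs_ge_zero by (rule le_less_trans[rotated])
  then have "0 < \<epsilon>" using assms(2) by (simp add: zero_less_mult_iff)
  have "real (h_alpha \<alpha> m q) / m * (1 - x0) = real (h_alpha \<alpha> m q) * (1 - x0) / m" by simp
  also have "\<dots> \<le> (real m - real (count_le q m (x0 * \<alpha>))) / m"
    by (intro divide_right_mono h_alpha_mult_le) (use assms(1,2) in auto)
  also have "\<dots> = 1 - F" using assms(3) by (simp add: F_def diff_divide_distrib)
  also have "\<dots> < 1 - P (x0 * \<alpha>) + (1 - x0) * \<epsilon> / 3"
    using close unfolding F_def[symmetric] abs_less_iff by linarith
  also have "\<dots> < (\<pi> + \<epsilon> / 3) * (1 - x0) + (1 - x0) * \<epsilon> / 3"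
    using assms(2) ratio by (simp add: divide_less_eq)
  also have "\<dots> < (\<pi> + \<epsilon>) * (1 - x0)"
    using assms(2) \<open>0 < \<epsilon>\<close> by (simp add: field_simps)
  finally show ?thesis by (rule mult_right_less_imp_less) (use assms(2) in simp)
qed

lemma (in prob_space) prob_tendsto_0_if_finite_cover:
  assumes "finite S" "\<And>s m. E s m \<in> events"
    and cover: "\<forall>\<^sub>F m in sequentially. A m \<subseteq> (\<Union>s\<in>S. E s m)"
    and lim: "\<And>s. s \<in> S \<Longrightarrow> (\<lambda>m. prob (E s m)) \<longlonglongrightarrow> 0"
  shows "(\<lambda>m. prob (A m)) \<longlonglongrightarrow> 0"
proof (rule tendsto_sandwich[OF _ _ tendsto_const])
  show "\<forall>\<^sub>F m in sequentially. prob (A m) \<le> (\<Sum>s\<in>S. prob (E s m))"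
    using cover
  proof eventually_elim
    case (elim m)
    then have "prob (A m) \<le> prob (\<Union>s\<in>S. E s m)"
      using assms(1,2) by (intro finite_measure_mono) auto
    also have "\<dots> \<le> (\<Sum>s\<in>S. prob (E s m))"
      using assms(1,2) by (intro finite_measure_subadditive_finite) auto
    finally show ?case .
  qed
  show "(\<lambda>m. \<Sum>s\<in>S. prob (E s m)) \<longlonglongrightarrow> 0"
    using lim by (intro tendsto_null_sum)
qed simp

locale iid_sample = prob_space M for M :: "'a measure" +
  fixes p :: "nat \<Rightarrow> 'a \<Rightarrow> real" and P :: "real \<Rightarrow> real"
  assumes p_measurable [measurable]: "\<And>i. p i \<in> borel_measurable M"
    and p_indep: "indep_vars (\<lambda>_. borel) p UNIV"
    and p_distr: "\<And>i x. prob {\<omega> \<in> space M. p i \<omega> \<le> x} = P x"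
begin

lemma P_mono: "mono P"
  unfolding mono_def p_distr[of 0, symmetric] by (auto intro!: finite_measure_mono)

lemma P_nonneg: "0 \<le> P x"
  unfolding p_distr[of 0, symmetric] by simp

lemma P_le_1: "P x \<le> 1"
  unfolding p_distr[of 0, symmetric] by simp

definition ecdf :: "nat \<Rightarrow> 'a \<Rightarrow> real \<Rightarrow> real" where
  "ecdf m \<omega> s = real (count_le (\<lambda>k. p k \<omega>) m s) / m"

lemma ecdf_measurable [measurable]: "(\<lambda>\<omega>. ecdf m \<omega> s) \<in> borel_measurable M"
  unfolding ecdf_def count_le_eq_sum by measurable

lemma ecdf_deviation_le:
  assumes "0 < m" "0 < \<delta>"
  shows "prob {\<omega> \<in> space M. \<delta> \<le> \<bar>ecdf m \<omega> s - P s\<bar>} \<le> 2 * exp (- 2 * \<delta>\<^sup>2 * m)"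
proof -
  define X where "X k \<omega> = (if p k \<omega> \<le> s then 1 else 0 :: real)" for k \<omega>
  have EX: "expectation (X k) = P s" for k
  proof -
    have "expectation (X k) = expectation (indicator {\<omega> \<in> space M. p k \<omega> \<le> s})"
      by (intro Bochner_Integration.integral_cong) (auto simp: X_def indicator_def)
    then show ?thesis by (simp add: p_distr)
  qed
  interpret Hoeffding_ineq M "{1..m}" X "\<lambda>_. 0" "\<lambda>_. 1" "real m * P s"
  proof unfold_locales
    show "indep_vars (\<lambda>_. borel) X {1..m}"
      unfolding X_def by (rule indep_vars_compose2[OF indep_vars_subset[OF p_indep]]) auto
  qed (auto simp: X_def EX)
  have "prob {\<omega> \<in> space M. \<delta> * m \<le> \<bar>(\<Sum>k\<in>{1..m}. X k \<omega>) - real m * P s\<bar>}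
      \<le> 2 * exp (- 2 * \<delta>\<^sup>2 * m)"
  proof -
    have "- 2 * (\<delta> * m)\<^sup>2 / m = - 2 * \<delta>\<^sup>2 * m" using assms by (simp add: power2_eq_square)
    then show ?thesis using Hoeffding_ineq_abs_ge[of "\<delta> * m"] assms by (simp del: mult_minus_left)
  qed
  moreover have "\<delta> \<le> \<bar>ecdf m \<omega> s - P s\<bar> \<longleftrightarrow> \<delta> * m \<le> \<bar>(\<Sum>k\<in>{1..m}. X k \<omega>) - real m * P s\<bar>" for \<omega>
    using assms by (simp add: ecdf_def count_le_eq_sum X_def field_simps)
  ultimately show ?thesis by simp
qed

lemma ecdf_deviation_tendsto_0:
  assumes "0 < \<delta>"
  shows "(\<lambda>m. prob {\<omega> \<in> space M. \<delta> \<le> \<bar>ecdf m \<omega> s - P s\<bar>}) \<longlonglongrightarrow> 0"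
proof (rule tendsto_sandwich[OF _ _ tendsto_const])
  show "\<forall>\<^sub>F m in sequentially.
      prob {\<omega> \<in> space M. \<delta> \<le> \<bar>ecdf m \<omega> s - P s\<bar>} \<le> 2 * exp (- 2 * \<delta>\<^sup>2 * m)"
    using eventually_gt_at_top[of 0] by eventually_elim (rule ecdf_deviation_le[OF _ assms])
  show "(\<lambda>m. 2 * exp (- 2 * \<delta>\<^sup>2 * real m)) \<longlonglongrightarrow> 0"
    using assms by real_asymp
qed simp

lemma conv_in_prob_if_ecdf_close:
  assumes "\<And>\<epsilon>. 0 < \<epsilon> \<Longrightarrow> \<exists>S \<delta>. finite S \<and> 0 < \<delta> \<and> (\<forall>\<^sub>F m in sequentially. \<forall>\<omega>\<in>space M.
      (\<forall>s\<in>S. \<bar>ecdf m \<omega> s - P s\<bar> < \<delta>) \<longrightarrow> \<bar>X m \<omega> - c\<bar> \<le> \<epsilon>)"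
  shows "conv_in_prob M X c"
  unfolding conv_in_prob_def
proof (intro allI impI)
  fix \<epsilon> :: real assume "0 < \<epsilon>"
  then obtain S \<delta> where "finite S" "0 < \<delta>" and close: "\<forall>\<^sub>F m in sequentially. \<forall>\<omega>\<in>space M.
      (\<forall>s\<in>S. \<bar>ecdf m \<omega> s - P s\<bar> < \<delta>) \<longrightarrow> \<bar>X m \<omega> - c\<bar> \<le> \<epsilon>"
    using assms by blast
  show "(\<lambda>m. prob {\<omega> \<in> space M. \<epsilon> < \<bar>X m \<omega> - c\<bar>}) \<longlonglongrightarrow> 0"
  proof (rule prob_tendsto_0_if_finite_cover[where E="\<lambda>s m. {\<omega> \<in> space M. \<delta> \<le> \<bar>ecdf m \<omega> s - P s\<bar>}"])
    show "\<forall>\<^sub>F m in sequentially. {\<omega> \<in> space M. \<epsilon> < \<bar>X m \<omega> - c\<bar>}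
        \<subseteq> (\<Union>s\<in>S. {\<omega> \<in> space M. \<delta> \<le> \<bar>ecdf m \<omega> s - P s\<bar>})"
      using close
    proof eventually_elim
      case (elim m)
      show ?case
      proof safe
        fix \<omega> assume "\<omega> \<in> space M" "\<epsilon> < \<bar>X m \<omega> - c\<bar>"
        then have "\<not> (\<forall>s\<in>S. \<bar>ecdf m \<omega> s - P s\<bar> < \<delta>)" using elim by fastforce
        then show "\<omega> \<in> (\<Union>s\<in>S. {\<omega> \<in> space M. \<delta> \<le> \<bar>ecdf m \<omega> s - P s\<bar>})"
          using \<open>\<omega> \<in> space M\<close> by (auto simp: not_less)
      qed
    qed
  qed (use \<open>finite S\<close> \<open>0 < \<delta>\<close> ecdf_deviation_tendsto_0 in auto)
qed

lemma h_alpha_conv_in_prob_0: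
  assumes "P \<alpha> = 1"
  shows "conv_in_prob M (\<lambda>m \<omega>. real (h_alpha \<alpha> m (\<lambda>i. p i \<omega>)) / m) 0"
proof -
  have "AE \<omega> in M. p k \<omega> \<le> \<alpha>" for k
    using p_distr[of k \<alpha>] assms by (subst prob_Collect_eq_1[symmetric]) auto
  then have "AE \<omega> in M. \<forall>k. p k \<omega> \<le> \<alpha>" by (simp add: AE_all_countable)
  then have h0: "AE \<omega> in M. h_alpha \<alpha> m (\<lambda>i. p i \<omega>) = 0" for m
    by eventually_elim (simp add: h_alpha_eq_0_if_all_le)
  have "prob {\<omega> \<in> space M. \<epsilon> < \<bar>real (h_alpha \<alpha> m (\<lambda>i. p i \<omega>)) / m - 0\<bar>} = 0" if "0 < \<epsilon>" for \<epsilon> m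
    by (rule prob_eq_0_AE, rule eventually_mono[OF h0[of m]]) (use that in simp)
  then show ?thesis by (simp add: conv_in_prob_def)
qed

lemma h_alpha_div_close_if_ecdf_close:
  fixes x0 \<epsilon> :: real and L m :: nat
  assumes "0 < \<alpha>" "P \<alpha> < 1" "0 < \<epsilon>" "0 < L" "1 / L < \<epsilon> * (1 - P \<alpha>) / 8" "0 < m" "1 / m < \<epsilon> / 2"
    and x0: "x0 \<in> {0..<1}" "(1 - P (x0 * \<alpha>)) / (1 - x0) < pi_bar P \<alpha> + \<epsilon> / 3"
    and dev_x0: "\<bar>ecdf m \<omega> (x0 * \<alpha>) - P (x0 * \<alpha>)\<bar> < (1 - x0) * \<epsilon> / 3"
    and dev_grid: "\<And>k. k \<in> {1..L} \<Longrightarrow>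
      \<bar>ecdf m \<omega> (real k / L * \<alpha>) - P (real k / L * \<alpha>)\<bar> < \<epsilon> * (1 - P \<alpha>) / 16"
  shows "\<bar>real (h_alpha \<alpha> m (\<lambda>i. p i \<omega>)) / m - pi_bar P \<alpha>\<bar> \<le> \<epsilon>"
proof -
  define \<pi> c where "\<pi> = pi_bar P \<alpha>" and "c = 1 - P \<alpha>"
  have line: "P (x * \<alpha>) \<le> 1 - \<pi> * (1 - x)" if "x \<in> {0..1}" for x
    using pi_bar_le_line[where P=P, OF assms(2) P_le_1 that] by (simp add: \<pi>_def)
  have "\<pi> \<le> 1" using line[of 0] P_nonneg[of 0] by simp
  have below_c: "P (x * \<alpha>) \<le> 1 - c" if "x \<in> {0..1}" for x
    using that assms(1) by (auto simp: c_def mult_left_le_one_le intro!: monoD[OF P_mono])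
  have "real (h_alpha \<alpha> m (\<lambda>i. p i \<omega>)) / m < \<pi> + \<epsilon>"
    using assms(1,6) x0 dev_x0 unfolding \<pi>_def ecdf_def by (intro h_alpha_div_less_if_ecdf_close) auto
  moreover have "(\<pi> - \<epsilon>) * m \<le> h_alpha \<alpha> m (\<lambda>i. p i \<omega>)"
  proof (rule h_alpha_ge_if_grid_bound[OF _ _ \<open>0 < \<epsilon>\<close> \<open>\<pi> \<le> 1\<close> \<open>0 < L\<close> _ \<open>0 < m\<close> _ below_c line])
    fix k assume "k \<in> {1..L}"
    then have "ecdf m \<omega> (real k / L * \<alpha>) < P (real k / L * \<alpha>) + \<epsilon> * c / 16"
      using dev_grid unfolding c_def abs_less_iff by fastforce
    then show "real (count_le (\<lambda>i. p i \<omega>) m (real k / L * \<alpha>))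
        \<le> (P (real k / L * \<alpha>) + \<epsilon> * c / 16) * m"
      using \<open>0 < m\<close> unfolding ecdf_def by (subst (asm) pos_divide_less_eq) auto
  qed (use assms in \<open>auto simp: c_def\<close>)
  then have "\<pi> - \<epsilon> \<le> real (h_alpha \<alpha> m (\<lambda>i. p i \<omega>)) / m" using \<open>0 < m\<close> by (simp add: le_divide_eq)
  ultimately show ?thesis by (simp add: \<pi>_def)
qed

lemma h_alpha_conv_in_prob_pi_bar:
  assumes "0 < \<alpha>" "P \<alpha> < 1"
  shows "conv_in_prob M (\<lambda>m \<omega>. real (h_alpha \<alpha> m (\<lambda>i. p i \<omega>)) / m) (pi_bar P \<alpha>)"
proof (rule conv_in_prob_if_ecdf_close)
  fix \<epsilon> :: real assume "0 < \<epsilon>"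
  define c where "c = 1 - P \<alpha>"
  have "0 < c" using assms by (simp add: c_def)
  obtain x0 where x0: "x0 \<in> {0..<1}" "(1 - P (x0 * \<alpha>)) / (1 - x0) < pi_bar P \<alpha> + \<epsilon> / 3"
    using pi_bar_less_ratio[where P=P, OF assms(2) P_le_1, of "\<epsilon> / 3"] \<open>0 < \<epsilon>\<close> by auto
  obtain L :: nat where "0 < L" "1 / L < \<epsilon> * c / 8"
    using ex_inverse_of_nat_less[of "\<epsilon> * c / 8"] \<open>0 < \<epsilon>\<close> \<open>0 < c\<close> by (auto simp: inverse_eq_divide)
  define \<delta> where "\<delta> = min ((1 - x0) * \<epsilon> / 3) (\<epsilon> * c / 16)"
  define S where "S = insert (x0 * \<alpha>) ((\<lambda>k. real k / L * \<alpha>) ` {1..L})"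
  have "\<bar>real (h_alpha \<alpha> m (\<lambda>i. p i \<omega>)) / m - pi_bar P \<alpha>\<bar> \<le> \<epsilon>"
    if "0 < m" "1 / m < \<epsilon> / 2" and dev: "\<forall>s\<in>S. \<bar>ecdf m \<omega> s - P s\<bar> < \<delta>" for m \<omega>
  proof (rule h_alpha_div_close_if_ecdf_close[OF assms \<open>0 < \<epsilon>\<close> \<open>0 < L\<close> _ that(1,2) x0])
    show "\<bar>ecdf m \<omega> (real k / L * \<alpha>) - P (real k / L * \<alpha>)\<bar> < \<epsilon> * (1 - P \<alpha>) / 16"
      if "k \<in> {1..L}" for k
      using dev that unfolding S_def \<delta>_def c_def by fastforce
  qed (use dev \<open>1 / L < \<epsilon> * c / 8\<close> in \<open>auto simp: S_def \<delta>_def c_def\<close>)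
  moreover have "\<forall>\<^sub>F m in sequentially. 0 < m \<and> 1 / real m < \<epsilon> / 2"
    using \<open>0 < \<epsilon>\<close> by (intro eventually_conj eventually_gt_at_top order_tendstoD(2)[OF lim_inverse_n']) simp
  moreover have "finite S" "0 < \<delta>" using x0 \<open>0 < \<epsilon>\<close> \<open>0 < c\<close> by (auto simp: S_def \<delta>_def)
  ultimately show "\<exists>S \<delta>. finite S \<and> 0 < \<delta> \<and> (\<forall>\<^sub>F m in sequentially. \<forall>\<omega>\<in>space M.
      (\<forall>s\<in>S. \<bar>ecdf m \<omega> s - P s\<bar> < \<delta>) \<longrightarrow> \<bar>real (h_alpha \<alpha> m (\<lambda>i. p i \<omega>)) / m - pi_bar P \<alpha>\<bar> \<le> \<epsilon>)"
    by (intro exI[of _ S] exI[of _ \<delta>]) (auto elim!: eventually_mono)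
qed

end

theorem lemma6:
  fixes M :: "'a measure" and p :: "nat \<Rightarrow> 'a \<Rightarrow> real"
    and P P1 :: "real \<Rightarrow> real" and \<gamma> \<alpha> :: real
  assumes "prob_space M"
    and "0 < \<alpha>" and "\<alpha> < 1"
    and "efron_model P \<gamma> P1"
    and "\<And>i. p i \<in> borel_measurable M"
    and "prob_space.indep_vars M (\<lambda>_. borel) p UNIV"
    and "\<And>i \<omega>. \<omega> \<in> space M \<Longrightarrow> p i \<omega> \<in> {0..1}"
    and "\<And>i x. measure M {\<omega> \<in> space M. p i \<omega> \<le> x} = P x"
  shows "conv_in_prob M (\<lambda>m \<omega>. real (h_alpha \<alpha> m (\<lambda>i. p i \<omega>)) / real m) (pi_bar P \<alpha>)
    \<and> (P \<alpha> < 1 \<longrightarrow> pi_bar P \<alpha> > 0)"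
proof -
  \<comment> \<open>Only the common distribution function P of the p-values is used: neither the Efron
    form of P, nor \<alpha> < 1, nor the range of the p-values is needed.\<close>
  interpret iid_sample M p P
    using assms(1,5,6,8) by (simp add: iid_sample_def iid_sample_axioms_def)
  show ?thesis
  proof (cases "P \<alpha> < 1")
    case True
    have "0 < 1 - P \<alpha>" using True by simp
    also have "\<dots> \<le> pi_bar P \<alpha>" using pi_bar_ge[where P=P, OF True P_le_1 P_mono] assms(2) by simp
    finally show ?thesis using h_alpha_conv_in_prob_pi_bar[OF assms(2) True] by simp
  next
    case False
    then have "P \<alpha> = 1" "pi_bar P \<alpha> = 0" using P_le_1[of \<alpha>] by (auto simp: pi_bar_def)
    then show ?thesis using h_alpha_conv_in_prob_0 by simp
  qed
qed

end
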